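(* Let $k,h$ be integers with $k\ge1$ and $h\ge k+2$. Let $T^*(k,h)$ be the tree with vertex set $\{x,z\}\cup\{z_1,\dots,z_k\}\cup\{x_{(i,j)}:1\le i,j\le h-1\}\cup\{y_{(i,j)}:1\le i,j\le h-1\}$ and edge set $\{xx_{(i,j)}:1\le i,j\le h-1\}\cup\{x_{(i,j)}y_{(i,j)}:1\le i,j\le h-1\}\cup\{xz,zz_1,\dots,zz_k\}$. Then $\tau(T^*(k,h))=k$ and $\beta_p(T^*(k,h))=h$.
   Context: Two vertices $u,v$ are twins if $N(u)\setminus\{v\}=N(v)\setminus\{u\}$; the twin number $\tau(G)$ is the maximum cardinality of an equivalence class of the twin relation. For a partition $\Pi=\{S_1,\dots,S_m\}$ of $V(G)$, $r(u|\Pi)=(d(u,S_1),\dots,d(u,S_m))$ with $d(u,S)=\min_{w\in S}d(u,w)$; $\Pi$ is locating if $r(u|\Pi)\ne r(v|\Pi)$ for all distinct $u,v$; $\beta_p(G)$ is the minimum size of a locating partition. *)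

theory Defs
  imports Main "HOL-Library.Disjoint_Sets"
begin

definition nbhd :: "'a set \<Rightarrow> ('a \<Rightarrow> 'a \<Rightarrow> bool) \<Rightarrow> 'a \<Rightarrow> 'a set" where
  "nbhd V E u = {w \<in> V. E u w}"

definition twins :: "'a set \<Rightarrow> ('a \<Rightarrow> 'a \<Rightarrow> bool) \<Rightarrow> 'a \<Rightarrow> 'a \<Rightarrow> bool" where
  "twins V E u v \<longleftrightarrow> nbhd V E u - {v} = nbhd V E v - {u}"

definition twin_class :: "'a set \<Rightarrow> ('a \<Rightarrow> 'a \<Rightarrow> bool) \<Rightarrow> 'a \<Rightarrow> 'a set" where
  "twin_class V E u = {v \<in> V. twins V E u v}"

definition twin_number :: "'a set \<Rightarrow> ('a \<Rightarrow> 'a \<Rightarrow> bool) \<Rightarrow> nat" where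
  "twin_number V E = Max ((\<lambda>u. card (twin_class V E u)) ` V)"

definition edge_rel :: "'a set \<Rightarrow> ('a \<Rightarrow> 'a \<Rightarrow> bool) \<Rightarrow> ('a \<times> 'a) set" where
  "edge_rel V E = {(u, v). u \<in> V \<and> v \<in> V \<and> E u v}"

definition gdist :: "'a set \<Rightarrow> ('a \<Rightarrow> 'a \<Rightarrow> bool) \<Rightarrow> 'a \<Rightarrow> 'a \<Rightarrow> nat" where
  "gdist V E u v = (LEAST n. (u, v) \<in> edge_rel V E ^^ n)"

definition setdist :: "'a set \<Rightarrow> ('a \<Rightarrow> 'a \<Rightarrow> bool) \<Rightarrow> 'a \<Rightarrow> 'a set \<Rightarrow> nat" where
  "setdist V E u S = Min ((\<lambda>w. gdist V E u w) ` S)"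

text \<open>The representation r(u|Pi), as a function on the classes of Pi (the ordering
  of the classes is irrelevant for the locating property).\<close>
definition repr :: "'a set \<Rightarrow> ('a \<Rightarrow> 'a \<Rightarrow> bool) \<Rightarrow> 'a set set \<Rightarrow> 'a \<Rightarrow> 'a set \<Rightarrow> nat" where
  "repr V E P u = (\<lambda>S. if S \<in> P then setdist V E u S else 0)"

definition locating_partition :: "'a set \<Rightarrow> ('a \<Rightarrow> 'a \<Rightarrow> bool) \<Rightarrow> 'a set set \<Rightarrow> bool" where
  "locating_partition V E P \<longleftrightarrow> partition_on V P \<and> finite P \<and>
     (\<forall>u\<in>V. \<forall>v\<in>V. u \<noteq> v \<longrightarrow> repr V E P u \<noteq> repr V E P v)"

definition partition_dimension :: "'a set \<Rightarrow> ('a \<Rightarrow> 'a \<Rightarrow> bool) \<Rightarrow> nat" where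
  "partition_dimension V E = (LEAST m. \<exists>P. locating_partition V E P \<and> card P = m)"

datatype tvert = Xv | Zv | Zi nat | XI nat nat | YI nat nat

definition Tstar_V :: "nat \<Rightarrow> nat \<Rightarrow> tvert set" where
  "Tstar_V k h = {Xv, Zv} \<union> Zi ` {1..k}
     \<union> {XI i j | i j. i \<in> {1..h-1} \<and> j \<in> {1..h-1}}
     \<union> {YI i j | i j. i \<in> {1..h-1} \<and> j \<in> {1..h-1}}"

definition Tstar_edges :: "nat \<Rightarrow> nat \<Rightarrow> (tvert \<times> tvert) set" where
  "Tstar_edges k h = {(Xv, XI i j) | i j. i \<in> {1..h-1} \<and> j \<in> {1..h-1}}
     \<union> {(XI i j, YI i j) | i j. i \<in> {1..h-1} \<and> j \<in> {1..h-1}}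
     \<union> {(Xv, Zv)} \<union> {(Zv, Zi l) | l. l \<in> {1..k}}"

definition Tstar_adj :: "nat \<Rightarrow> nat \<Rightarrow> tvert \<Rightarrow> tvert \<Rightarrow> bool" where
  "Tstar_adj k h u v \<longleftrightarrow> (u, v) \<in> Tstar_edges k h \<or> (v, u) \<in> Tstar_edges k h"

end

(*
  Only the leaves z_1, ..., z_k of T*(k,h) have a common neighbourhood, so the twin classes are
  {z_1, ..., z_k} and singletons.

  For the partition dimension, put x_(i,j) into class i, y_(i,j) into class j, z_l into class l,
  and x, z into class h. Two vertices are then already told apart by the sets of classes they
  meet within distance 0, 1 and 2.

  Conversely, in a locating partition with p classes the representation of x_(i,j) depends only
  on the class A of x_(i,j) and the class B of its pendant neighbour y_(i,j), where B = A and
  B = (class of x) give the same representation. This leaves p^2 - p + 1 possible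
  representations for the (h-1)^2 vertices x_(i,j), which forces p >= h.
*)
theory Submission
  imports Defs
begin

lemma gdist_eqI:
  assumes walk: "(u, v) \<in> edge_rel V E ^^ d v" and start: "d u = 0"
    and step: "\<And>w x. (w, x) \<in> edge_rel V E \<Longrightarrow> d x \<le> Suc (d w)"
  shows "gdist V E u v = d v"
proof -
  have "d x \<le> n" if "(u, x) \<in> edge_rel V E ^^ n" for n x
    using that
  proof (induction n arbitrary: x)
    case 0
    then show ?case using start by simp
  next
    case (Suc n)
    then obtain w where "(u, w) \<in> edge_rel V E ^^ n" "(w, x) \<in> edge_rel V E" by auto
    with Suc.IH step show ?case by fastforce
  qed
  then show ?thesis
    unfolding gdist_def using walk by (intro Least_equality) auto
qed

lemma twins_refl: "twins V E u u"
  by (simp add: twins_def)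

definition part_of :: "'a set set \<Rightarrow> 'a \<Rightarrow> 'a set" where
  "part_of P v = (THE S. S \<in> P \<and> v \<in> S)"

lemma part_of_eqI:
  assumes "partition_on A P" "S \<in> P" "v \<in> S"
  shows "part_of P v = S"
  unfolding part_of_def
proof (rule the_equality)
  show "S \<in> P \<and> v \<in> S" using assms(2,3) ..
  show "T = S" if "T \<in> P \<and> v \<in> T" for T
    using that assms disjointD[OF partition_onD2[OF assms(1)]] by blast
qed

lemma part_of_mem:
  assumes "partition_on A P" "v \<in> A"
  shows "part_of P v \<in> P" "v \<in> part_of P v"
proof -
  obtain S where "S \<in> P" "v \<in> S" using assms partition_onD1 by blast
  then show "part_of P v \<in> P" "v \<in> part_of P v" using part_of_eqI[OF assms(1)] by auto
qed

lemma card_product_minus_diagonal: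
  assumes "finite P" "C \<in> P"
  shows "card (P \<times> P - (\<lambda>A. (A, A)) ` (P - {C})) + card P = card P * card P + 1"
proof -
  have "card ((\<lambda>A. (A, A)) ` (P - {C})) = card P - 1"
    using assms by (simp add: card_image inj_on_def)
  moreover have "(\<lambda>A. (A, A)) ` (P - {C}) \<subseteq> P \<times> P" by auto
  moreover have "1 \<le> card P" using assms by (auto simp: Suc_le_eq card_gt_0_iff)
  moreover have sq: "card P \<le> card P * card P" by simp
  ultimately show ?thesis
    using assms(1) by (simp add: card_Diff_subset card_cartesian_product) (use sq in linarith)
qed

lemma square_bound_imp_less:
  fixes m p :: nat
  assumes "2 \<le> m" "m * m + p \<le> p * p + 1"
  shows "m < p"
proof (rule ccontr)
  assume "\<not> m < p"
  then have "p * p \<le> p * m" by simp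
  moreover have "1 < (m - p) * m + p"
  proof (cases "p = m")
    case True
    then show ?thesis using assms(1) by simp
  next
    case False
    then have "m \<le> (m - p) * m" using \<open>\<not> m < p\<close> mult_le_mono1[of 1 "m - p" m] by simp
    then show ?thesis using assms(1) by linarith
  qed
  moreover have "m * m = p * m + (m - p) * m" using \<open>\<not> m < p\<close> by (simp add: algebra_simps)
  ultimately show False using assms(2) by linarith
qed

fun Tstar_vertex :: "nat \<Rightarrow> nat \<Rightarrow> tvert \<Rightarrow> bool" where
  "Tstar_vertex k h Xv \<longleftrightarrow> True"
| "Tstar_vertex k h Zv \<longleftrightarrow> True"
| "Tstar_vertex k h (Zi l) \<longleftrightarrow> l \<in> {1..k}"
| "Tstar_vertex k h (XI i j) \<longleftrightarrow> i \<in> {1..h-1} \<and> j \<in> {1..h-1}"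
| "Tstar_vertex k h (YI i j) \<longleftrightarrow> i \<in> {1..h-1} \<and> j \<in> {1..h-1}"

fun Tstar_adjacent :: "nat \<Rightarrow> nat \<Rightarrow> tvert \<Rightarrow> tvert \<Rightarrow> bool" where
  "Tstar_adjacent k h Xv Zv \<longleftrightarrow> True"
| "Tstar_adjacent k h Zv Xv \<longleftrightarrow> True"
| "Tstar_adjacent k h Xv (XI i j) \<longleftrightarrow> Tstar_vertex k h (XI i j)"
| "Tstar_adjacent k h (XI i j) Xv \<longleftrightarrow> Tstar_vertex k h (XI i j)"
| "Tstar_adjacent k h (XI i j) (YI i' j') \<longleftrightarrow> i = i' \<and> j = j' \<and> Tstar_vertex k h (XI i j)"
| "Tstar_adjacent k h (YI i' j') (XI i j) \<longleftrightarrow> i = i' \<and> j = j' \<and> Tstar_vertex k h (XI i j)"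
| "Tstar_adjacent k h Zv (Zi l) \<longleftrightarrow> Tstar_vertex k h (Zi l)"
| "Tstar_adjacent k h (Zi l) Zv \<longleftrightarrow> Tstar_vertex k h (Zi l)"
| "Tstar_adjacent k h _ _ \<longleftrightarrow> False"

lemma mem_Tstar_V [simp]: "v \<in> Tstar_V k h \<longleftrightarrow> Tstar_vertex k h v"
  by (cases v) (auto simp: Tstar_V_def)

lemma Tstar_adj_eq_adjacent: "Tstar_adj k h u v \<longleftrightarrow> Tstar_adjacent k h u v"
  by (cases u; cases v) (auto simp: Tstar_adj_def Tstar_edges_def)

lemma finite_Tstar_V: "finite (Tstar_V k h)"
proof (rule finite_subset)
  show "Tstar_V k h \<subseteq> {Xv, Zv} \<union> Zi ` {1..k} \<union> case_prod XI ` ({1..h-1} \<times> {1..h-1})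
      \<union> case_prod YI ` ({1..h-1} \<times> {1..h-1})"
    by (auto simp: Tstar_V_def)
qed simp

lemma edge_rel_Tstar_iff:
  "(u, v) \<in> edge_rel (Tstar_V k h) (Tstar_adj k h) \<longleftrightarrow>
     Tstar_vertex k h u \<and> Tstar_vertex k h v \<and> Tstar_adjacent k h u v"
  by (simp add: edge_rel_def Tstar_adj_eq_adjacent)

fun depth :: "tvert \<Rightarrow> nat" where
  "depth Xv = 0" | "depth Zv = 1" | "depth (XI i j) = 1" | "depth (Zi l) = 2" | "depth (YI i j) = 2"

text \<open>The ancestor at depth 1 (the root is its own branch): distinct vertices of different
  branches are joined through the root x.\<close>
fun branch :: "tvert \<Rightarrow> tvert" where
  "branch Xv = Xv" | "branch Zv = Zv" | "branch (Zi l) = Zv"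
| "branch (XI i j) = XI i j" | "branch (YI i j) = XI i j"

definition tdist :: "tvert \<Rightarrow> tvert \<Rightarrow> nat" where
  "tdist u v = (if u = v then 0 else if branch u = branch v then (if depth u = depth v then 2 else 1)
     else depth u + depth v)"

lemma tdist_eq_0_iff [simp]: "tdist u v = 0 \<longleftrightarrow> u = v"
  by (cases u; cases v) (auto simp: tdist_def)

lemma tdist_adjacent: "Tstar_adjacent k h w x \<Longrightarrow> tdist u x \<le> Suc (tdist u w)"
  by (cases w; cases x; cases u) (auto simp: tdist_def)

lemma tdist_le_1_iff:
  "Tstar_vertex k h u \<Longrightarrow> Tstar_vertex k h w \<Longrightarrow>
    tdist u w \<le> 1 \<longleftrightarrow> w = u \<or> Tstar_adjacent k h u w"
  by (cases u; cases w) (auto simp: tdist_def)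

lemma relpow_2_I: "(a, b) \<in> R \<Longrightarrow> (b, c) \<in> R \<Longrightarrow> (a, c) \<in> R ^^ 2"
  by (auto simp: numeral_2_eq_2 relpow_Suc_I2)

lemma walk_root:
  assumes "Tstar_vertex k h v"
  shows "(Xv, v) \<in> edge_rel (Tstar_V k h) (Tstar_adj k h) ^^ depth v
       \<and> (v, Xv) \<in> edge_rel (Tstar_V k h) (Tstar_adj k h) ^^ depth v"
  using assms by (cases v) (auto intro: relpow_2_I[of _ Zv] relpow_2_I[of _ "XI _ _"] simp: edge_rel_Tstar_iff)

lemma walk_tdist:
  assumes u: "Tstar_vertex k h u" and v: "Tstar_vertex k h v"
  shows "(u, v) \<in> edge_rel (Tstar_V k h) (Tstar_adj k h) ^^ tdist u v"
proof (cases "u \<noteq> v \<and> branch u \<noteq> branch v")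
  case True
  then have "tdist u v = depth u + depth v" by (simp add: tdist_def)
  then show ?thesis using walk_root[OF u] walk_root[OF v] by (auto simp: relpow_add)
next
  case False
  then show ?thesis using u v
    by (cases u; cases v) (auto intro: relpow_2_I[of _ Zv] simp: tdist_def edge_rel_Tstar_iff)
qed

lemma gdist_Tstar:
  "Tstar_vertex k h u \<Longrightarrow> Tstar_vertex k h v \<Longrightarrow>
    gdist (Tstar_V k h) (Tstar_adj k h) u v = tdist u v"
  by (rule gdist_eqI[OF walk_tdist]) (use tdist_adjacent in \<open>auto simp: edge_rel_Tstar_iff\<close>)

lemma setdist_Tstar:
  "u \<in> Tstar_V k h \<Longrightarrow> S \<subseteq> Tstar_V k h \<Longrightarrow>
    setdist (Tstar_V k h) (Tstar_adj k h) u S = Min (tdist u ` S)"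
  unfolding setdist_def by (intro arg_cong[where f = Min] image_cong) (auto simp: gdist_Tstar subset_iff)

lemma setdist_Tstar_le_iff:
  assumes "u \<in> Tstar_V k h" "S \<subseteq> Tstar_V k h" "S \<noteq> {}"
  shows "setdist (Tstar_V k h) (Tstar_adj k h) u S \<le> n \<longleftrightarrow> (\<exists>w\<in>S. tdist u w \<le> n)"
  using assms finite_subset[OF assms(2) finite_Tstar_V] by (simp add: setdist_Tstar Min_le_iff)

lemma setdist_Tstar_eq_0:
  assumes "u \<in> S" "S \<subseteq> Tstar_V k h"
  shows "setdist (Tstar_V k h) (Tstar_adj k h) u S = 0"
proof -
  have "u \<in> Tstar_V k h" "S \<noteq> {}" using assms by auto
  moreover have "\<exists>w\<in>S. tdist u w \<le> 0" using assms(1) by (intro bexI[of _ u]) simp_all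
  ultimately show ?thesis using setdist_Tstar_le_iff[OF _ assms(2), of u 0] by simp
qed

lemma setdist_Tstar_eq_1:
  assumes "u \<in> Tstar_V k h" "S \<subseteq> Tstar_V k h" "u \<notin> S" "w \<in> S" "tdist u w = 1"
  shows "setdist (Tstar_V k h) (Tstar_adj k h) u S = 1"
proof -
  have ne: "S \<noteq> {}" using assms(4) by blast
  have "setdist (Tstar_V k h) (Tstar_adj k h) u S \<le> 1"
    using setdist_Tstar_le_iff[OF assms(1,2) ne, of 1] assms(4,5) by (metis order_refl)
  moreover have "\<not> setdist (Tstar_V k h) (Tstar_adj k h) u S \<le> 0"
    using setdist_Tstar_le_iff[OF assms(1,2) ne, of 0] assms(3) by force
  ultimately show ?thesis by simp
qed

lemma setdist_XI_eq_Suc: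
  assumes "Tstar_vertex k h (XI i j)" "S \<subseteq> Tstar_V k h" "S \<noteq> {}"
    and "XI i j \<notin> S" "YI i j \<notin> S" "Xv \<notin> S"
  shows "setdist (Tstar_V k h) (Tstar_adj k h) (XI i j) S = Suc (setdist (Tstar_V k h) (Tstar_adj k h) Xv S)"
proof -
  have "tdist (XI i j) w = Suc (tdist Xv w)" if "w \<in> S" for w
    using that assms(4-6) by (cases w) (auto simp: tdist_def)
  then have "tdist (XI i j) ` S = Suc ` tdist Xv ` S"
    by (simp add: image_image)
  moreover have "finite S" using finite_subset[OF assms(2) finite_Tstar_V] .
  ultimately show ?thesis
    using assms by (simp add: setdist_Tstar mono_Min_commute[of Suc] mono_Suc)
qed

lemma twins_adjacent:
  assumes "twins (Tstar_V k h) (Tstar_adj k h) u v" "Tstar_vertex k h w" "w \<noteq> u" "w \<noteq> v"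
  shows "Tstar_adjacent k h u w \<longleftrightarrow> Tstar_adjacent k h v w"
  using assms unfolding twins_def nbhd_def by (auto simp: Tstar_adj_eq_adjacent set_eq_iff)

lemma nbhd_Zi: "Tstar_vertex k h (Zi l) \<Longrightarrow> nbhd (Tstar_V k h) (Tstar_adj k h) (Zi l) = {Zv}"
  unfolding nbhd_def Tstar_adj_eq_adjacent by (auto elim: Tstar_adjacent.elims)

lemma twins_Tstar_iff:
  assumes "1 \<le> k" "2 \<le> h" and u: "Tstar_vertex k h u" and v: "Tstar_vertex k h v" and "u \<noteq> v"
  shows "twins (Tstar_V k h) (Tstar_adj k h) u v \<longleftrightarrow> (\<exists>l l'. u = Zi l \<and> v = Zi l')"
proof
  assume tw: "twins (Tstar_V k h) (Tstar_adj k h) u v"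
  note same = twins_adjacent[OF tw]
  have x11: "Tstar_vertex k h (XI 1 1)" and z1: "Tstar_vertex k h (Zi 1)" using assms(1,2) by auto
  show "\<exists>l l'. u = Zi l \<and> v = Zi l'"
  proof (cases u)
    case Xv
    then show ?thesis using assms x11 same[of Zv] same[of "XI 1 1"] by (cases v) auto
  next
    case Zv
    then show ?thesis using assms z1 same[of "Zi 1"] same[of Xv] by (cases v) auto
  next
    case (XI i j)
    then show ?thesis using assms same[of "YI i j"] same[of Xv] by (cases v) auto
  next
    case (YI i j)
    then show ?thesis using assms same[of "XI i j"] same[of Xv] same[of Zv] by (cases v) auto
  next
    case (Zi l)
    then show ?thesis using assms x11 same[of "XI 1 1"] same[of Xv] same[of Zv] by (cases v) auto
  qed
next
  assume "\<exists>l l'. u = Zi l \<and> v = Zi l'"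
  then show "twins (Tstar_V k h) (Tstar_adj k h) u v"
    using u v by (auto simp: twins_def nbhd_Zi)
qed

lemma twin_class_Tstar:
  assumes "1 \<le> k" "2 \<le> h" "Tstar_vertex k h u"
  shows "twin_class (Tstar_V k h) (Tstar_adj k h) u = (if \<exists>l. u = Zi l then Zi ` {1..k} else {u})"
proof -
  have mem: "v \<in> twin_class (Tstar_V k h) (Tstar_adj k h) u \<longleftrightarrow>
      Tstar_vertex k h v \<and> (v = u \<or> (\<exists>l l'. u = Zi l \<and> v = Zi l'))" for v
    using twins_Tstar_iff[OF assms, of v] twins_refl[of "Tstar_V k h" "Tstar_adj k h" u]
    unfolding twin_class_def mem_Tstar_V by blast
  show ?thesis
  proof (cases "\<exists>l. u = Zi l")
    case True
    then have "v \<in> twin_class (Tstar_V k h) (Tstar_adj k h) u \<longleftrightarrow> v \<in> Zi ` {1..k}" for v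
      using mem[of v] assms(3) by (cases v) (auto simp: image_iff)
    with True show ?thesis by auto
  next
    case False
    then show ?thesis using mem assms(3) by auto
  qed
qed

lemma twin_number_Tstar:
  assumes "1 \<le> k" "2 \<le> h"
  shows "twin_number (Tstar_V k h) (Tstar_adj k h) = k"
proof -
  let ?c = "\<lambda>u. card (twin_class (Tstar_V k h) (Tstar_adj k h) u)"
  have c: "?c u = (if \<exists>l. u = Zi l then k else 1)" if "Tstar_vertex k h u" for u
    using twin_class_Tstar[OF assms that] by (simp add: card_image inj_on_def)
  have "?c ` Tstar_V k h = {k, 1}"
  proof
    show "?c ` Tstar_V k h \<subseteq> {k, 1}" by (rule image_subsetI) (simp add: c)
    have "k = ?c (Zi 1)" "1 = ?c Xv" using assms by (simp_all add: c)
    moreover have "Zi 1 \<in> Tstar_V k h" "Xv \<in> Tstar_V k h" using assms by auto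
    ultimately show "{k, 1} \<subseteq> ?c ` Tstar_V k h" by blast
  qed
  then show ?thesis using assms by (simp add: twin_number_def)
qed

fun owner :: "nat \<Rightarrow> tvert \<Rightarrow> nat" where
  "owner h Xv = h" | "owner h Zv = h" | "owner h (Zi l) = l"
| "owner h (XI i j) = i" | "owner h (YI i j) = j"

definition owner_class :: "nat \<Rightarrow> nat \<Rightarrow> nat \<Rightarrow> tvert set" where
  "owner_class k h c = {v \<in> Tstar_V k h. owner h v = c}"

definition owner_partition :: "nat \<Rightarrow> nat \<Rightarrow> tvert set set" where
  "owner_partition k h = owner_class k h ` {1..h}"

definition owners_within :: "nat \<Rightarrow> nat \<Rightarrow> tvert \<Rightarrow> nat \<Rightarrow> nat set" where
  "owners_within k h u n = owner h ` {w. Tstar_vertex k h w \<and> tdist u w \<le> n}"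

lemma owner_mem: "k < h \<Longrightarrow> Tstar_vertex k h v \<Longrightarrow> owner h v \<in> {1..h}"
  by (cases v) auto

lemma owner_class_witness: "c \<in> {1..h} \<Longrightarrow> (if c = h then Xv else XI c 1) \<in> owner_class k h c"
  by (auto simp: owner_class_def)

lemma partition_on_owner_partition:
  assumes "k < h"
  shows "partition_on (Tstar_V k h) (owner_partition k h)"
proof (rule partition_onI)
  show "\<Union> (owner_partition k h) = Tstar_V k h"
    using owner_mem[OF assms] by (auto simp: owner_partition_def owner_class_def)
  show "disjnt p q" if "p \<in> owner_partition k h" "q \<in> owner_partition k h" "p \<noteq> q" for p q
    using that by (auto simp: owner_partition_def owner_class_def disjnt_def)
  show "{} \<notin> owner_partition k h"
    using owner_class_witness by (fastforce simp: owner_partition_def)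
qed

lemma card_owner_partition: "card (owner_partition k h) = h"
proof -
  have "inj_on (owner_class k h) {1..h}"
  proof (rule inj_onI)
    fix a b assume "a \<in> {1..h}" "b \<in> {1..h}" "owner_class k h a = owner_class k h b"
    then show "a = b" using owner_class_witness[of a h k] by (auto simp: owner_class_def split: if_splits)
  qed
  then show ?thesis by (simp add: owner_partition_def card_image)
qed

lemma setdist_owner_class_le_iff:
  assumes "Tstar_vertex k h u" "c \<in> {1..h}"
  shows "setdist (Tstar_V k h) (Tstar_adj k h) u (owner_class k h c) \<le> n
    \<longleftrightarrow> c \<in> owners_within k h u n"
proof -
  have "owner_class k h c \<subseteq> Tstar_V k h" "owner_class k h c \<noteq> {}"
    using owner_class_witness[OF assms(2)] by (auto simp: owner_class_def)
  with assms(1) show ?thesis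
    by (simp add: setdist_Tstar_le_iff owners_within_def owner_class_def image_iff) blast
qed

lemma owners_within_eq_if_repr_eq:
  assumes "k < h" "Tstar_vertex k h u" "Tstar_vertex k h v"
    and repr: "repr (Tstar_V k h) (Tstar_adj k h) (owner_partition k h) u
             = repr (Tstar_V k h) (Tstar_adj k h) (owner_partition k h) v"
  shows "owners_within k h u n = owners_within k h v n"
proof -
  have "c \<in> owners_within k h u n \<longleftrightarrow> c \<in> owners_within k h v n" if c: "c \<in> {1..h}" for c
  proof -
    have "owner_class k h c \<in> owner_partition k h" using c by (simp add: owner_partition_def)
    then have "setdist (Tstar_V k h) (Tstar_adj k h) u (owner_class k h c)
             = setdist (Tstar_V k h) (Tstar_adj k h) v (owner_class k h c)"
      using fun_cong[OF repr, of "owner_class k h c"] by (simp add: repr_def)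
    then show ?thesis using setdist_owner_class_le_iff[OF _ c] assms(2,3) by metis
  qed
  moreover have "owners_within k h w n \<subseteq> {1..h}" for w
    using owner_mem[OF assms(1)] by (auto simp: owners_within_def)
  ultimately show ?thesis by blast
qed

lemma owners_within_0: "Tstar_vertex k h u \<Longrightarrow> owners_within k h u 0 = {owner h u}"
  by (auto simp: owners_within_def)

lemma owners_withinI:
  "Tstar_vertex k h w \<Longrightarrow> tdist u w \<le> n \<Longrightarrow> c = owner h w \<Longrightarrow> c \<in> owners_within k h u n"
  by (auto simp: owners_within_def)

fun closed_nbhd_owners :: "nat \<Rightarrow> nat \<Rightarrow> tvert \<Rightarrow> nat set" where
  "closed_nbhd_owners k h Xv = {1..h}"
| "closed_nbhd_owners k h Zv = insert h {1..k}"
| "closed_nbhd_owners k h (Zi l) = {l, h}"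
| "closed_nbhd_owners k h (XI i j) = {i, j, h}"
| "closed_nbhd_owners k h (YI i j) = {i, j}"

lemma owners_within_1:
  assumes "k < h" "Tstar_vertex k h u"
  shows "owners_within k h u 1 = closed_nbhd_owners k h u" (is "_ = ?N")
proof
  show "owners_within k h u 1 \<subseteq> ?N"
  proof
    fix c assume "c \<in> owners_within k h u 1"
    then obtain w where w: "Tstar_vertex k h w" "tdist u w \<le> 1" and c: "c = owner h w"
      by (auto simp: owners_within_def)
    then have "w = u \<or> Tstar_adjacent k h u w" using tdist_le_1_iff[OF assms(2) w(1)] by blast
    then show "c \<in> ?N" using assms w(1) c by (cases u; cases w) auto
  qed
  show "?N \<subseteq> owners_within k h u 1"
  proof (cases u)
    case Xv
    have "c \<in> owners_within k h Xv 1" if "c \<in> {1..h}" for c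
    proof (cases "c = h")
      case True
      then show ?thesis by (intro owners_withinI[of k h Xv]) (auto simp: tdist_def)
    next
      case False
      then show ?thesis using that by (intro owners_withinI[of k h "XI c 1"]) (auto simp: tdist_def)
    qed
    then show ?thesis using Xv by auto
  next
    case Zv
    have "c \<in> owners_within k h Zv 1" if "c \<in> insert h {1..k}" for c
      using that assms(1)
      by (auto intro: owners_withinI[of k h Zv] owners_withinI[of k h "Zi c"] simp: tdist_def)
    then show ?thesis using Zv by auto
  next
    case (Zi l)
    then show ?thesis using assms(2)
      by (auto intro: owners_withinI[of k h u] owners_withinI[of k h Zv] simp: tdist_def)
  next
    case (XI i j)
    then show ?thesis using assms(2)
      by (auto intro: owners_withinI[of k h u] owners_withinI[of k h Xv] owners_withinI[of k h "YI i j"]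
          simp: tdist_def)
  next
    case (YI i j)
    then show ?thesis using assms(2)
      by (auto intro: owners_withinI[of k h u] owners_withinI[of k h "XI i j"] simp: tdist_def)
  qed
qed

lemma owners_within_2:
  assumes "k + 2 \<le> h"
  shows "h - 1 \<notin> owners_within k h (Zi l) 2"
    and "Tstar_vertex k h (XI i j) \<Longrightarrow> h - 1 \<in> owners_within k h (XI i j) 2"
proof -
  show "h - 1 \<notin> owners_within k h (Zi l) 2"
  proof
    assume "h - 1 \<in> owners_within k h (Zi l) 2"
    then obtain w where "Tstar_vertex k h w" "tdist (Zi l) w \<le> 2" "h - 1 = owner h w"
      by (auto simp: owners_within_def)
    then show False using assms by (cases w) (auto simp: tdist_def split: if_splits)
  qed
  show "h - 1 \<in> owners_within k h (XI i j) 2" if "Tstar_vertex k h (XI i j)"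
    using that assms by (intro owners_withinI[of k h "XI (h - 1) 1"]) (auto simp: tdist_def)
qed

lemma eq_if_owners_within_eq:
  assumes "k + 2 \<le> h" "Tstar_vertex k h u" "Tstar_vertex k h v"
    and same: "\<And>n. owners_within k h u n = owners_within k h v n"
  shows "u = v"
proof -
  have "k < h" using assms(1) by simp
  have owner: "owner h u = owner h v"
    using same[of 0] by (simp add: owners_within_0 assms(2,3))
  have near: "closed_nbhd_owners k h u = closed_nbhd_owners k h v"
    using same[of 1] owners_within_1[OF \<open>k < h\<close>] assms(2,3) by simp
  have "h - 1 \<in> {1..h}" "h - 1 \<notin> insert h {1..k}" using assms(1) by auto
  then have far: "\<not> {1..h} \<subseteq> insert h {1..k}" by blast
  show ?thesis
    using assms(2,3) owner equalityD1[OF near] equalityD2[OF near] far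
      owners_within_2[OF assms(1)] same[of 2]
    by (cases u; cases v) (auto simp: insert_subset)
qed

lemma locating_owner_partition:
  assumes "k + 2 \<le> h"
  shows "locating_partition (Tstar_V k h) (Tstar_adj k h) (owner_partition k h)"
  unfolding locating_partition_def
proof (intro conjI ballI impI)
  show "partition_on (Tstar_V k h) (owner_partition k h)"
    using assms by (intro partition_on_owner_partition) simp
  show "finite (owner_partition k h)" by (simp add: owner_partition_def)
  fix u v assume u: "u \<in> Tstar_V k h" and v: "v \<in> Tstar_V k h" and "u \<noteq> v"
  show "repr (Tstar_V k h) (Tstar_adj k h) (owner_partition k h) u
      \<noteq> repr (Tstar_V k h) (Tstar_adj k h) (owner_partition k h) v"
  proof
    assume "repr (Tstar_V k h) (Tstar_adj k h) (owner_partition k h) u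
          = repr (Tstar_V k h) (Tstar_adj k h) (owner_partition k h) v"
    then have "owners_within k h u n = owners_within k h v n" for n
      using assms u v by (intro owners_within_eq_if_repr_eq) simp_all
    then have "u = v" using assms u v by (intro eq_if_owners_within_eq) simp_all
    with \<open>u \<noteq> v\<close> show False ..
  qed
qed

text \<open>If y_(i,j) shares the class of x_(i,j), the only class at distance 1 from x_(i,j) is
  that of x, exactly as when y_(i,j) lies in the class of x; the second component records
  this class at distance 1.\<close>
definition pendant_code :: "tvert set set \<Rightarrow> nat \<Rightarrow> nat \<Rightarrow> tvert set \<times> tvert set" where
  "pendant_code P i j = (part_of P (XI i j),
     if part_of P (YI i j) = part_of P (XI i j) then part_of P Xv else part_of P (YI i j))"

lemma pendant_code_mem:
  assumes "partition_on (Tstar_V k h) P" "Tstar_vertex k h (XI i j)"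
  shows "pendant_code P i j \<in> P \<times> P - (\<lambda>A. (A, A)) ` (P - {part_of P Xv})"
proof -
  have "Tstar_vertex k h (YI i j)" using assms(2) by simp
  then show ?thesis
    using assms part_of_mem[OF assms(1)] by (auto simp: pendant_code_def)
qed

lemma setdist_XI_pendant_code:
  assumes part: "partition_on (Tstar_V k h) P" and x: "Tstar_vertex k h (XI i j)" and S: "S \<in> P"
  shows "setdist (Tstar_V k h) (Tstar_adj k h) (XI i j) S =
    (if S = fst (pendant_code P i j) then 0
     else if S = snd (pendant_code P i j) \<or> S = part_of P Xv then 1
     else Suc (setdist (Tstar_V k h) (Tstar_adj k h) Xv S))"
proof -
  let ?A = "part_of P (XI i j)" and ?B = "part_of P (YI i j)" and ?C = "part_of P Xv"
  have y: "Tstar_vertex k h (YI i j)" using x by simp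
  have SV: "S \<subseteq> Tstar_V k h" "S \<noteq> {}"
    using S partition_onD1[OF part] partition_onD3[OF part] by auto
  have in_S: "v \<in> S \<longleftrightarrow> S = part_of P v" if "Tstar_vertex k h v" for v
    using that S part_of_mem[OF part] part_of_eqI[OF part S] by auto
  show ?thesis
  proof (cases "S = ?A")
    case True
    then show ?thesis
      using in_S[OF x] setdist_Tstar_eq_0[OF _ SV(1)] by (simp add: pendant_code_def)
  next
    case notA: False
    then have "XI i j \<notin> S" using in_S[OF x] by blast
    have near: "YI i j \<in> S \<or> Xv \<in> S \<longleftrightarrow> S = snd (pendant_code P i j) \<or> S = ?C"
      using notA in_S[OF y] in_S[of Xv] by (auto simp: pendant_code_def)
    show ?thesis
    proof (cases "YI i j \<in> S \<or> Xv \<in> S")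
      case True
      then obtain w where "w \<in> S" "tdist (XI i j) w = 1" by (auto simp: tdist_def)
      then show ?thesis
        using True near notA setdist_Tstar_eq_1[OF _ SV(1) \<open>XI i j \<notin> S\<close>] x
        by (simp add: pendant_code_def)
    next
      case False
      then show ?thesis
        using near notA setdist_XI_eq_Suc[OF x SV \<open>XI i j \<notin> S\<close>]
        by (simp add: pendant_code_def)
    qed
  qed
qed

lemma repr_XI_eq_if_pendant_code_eq:
  assumes "partition_on (Tstar_V k h) P" "Tstar_vertex k h (XI i j)" "Tstar_vertex k h (XI i' j')"
    and "pendant_code P i j = pendant_code P i' j'"
  shows "repr (Tstar_V k h) (Tstar_adj k h) P (XI i j) = repr (Tstar_V k h) (Tstar_adj k h) P (XI i' j')"
  using assms by (auto simp: repr_def setdist_XI_pendant_code)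

lemma card_locating_partition_Tstar_ge:
  assumes "3 \<le> h" and loc: "locating_partition (Tstar_V k h) (Tstar_adj k h) P"
  shows "h \<le> card P"
proof -
  have part: "partition_on (Tstar_V k h) P" and fin: "finite P"
    and distinct: "\<And>u v. u \<in> Tstar_V k h \<Longrightarrow> v \<in> Tstar_V k h \<Longrightarrow>
      repr (Tstar_V k h) (Tstar_adj k h) P u = repr (Tstar_V k h) (Tstar_adj k h) P v \<Longrightarrow> u = v"
    using loc unfolding locating_partition_def by blast+
  let ?I = "{1..h-1} \<times> {1..h-1}" and ?T = "P \<times> P - (\<lambda>A. (A, A)) ` (P - {part_of P Xv})"
  have "inj_on (case_prod (pendant_code P)) ?I"
  proof (rule inj_onI)
    fix p q assume p: "p \<in> ?I" and q: "q \<in> ?I"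
      and eq: "case_prod (pendant_code P) p = case_prod (pendant_code P) q"
    obtain i j i' j' where [simp]: "p = (i, j)" "q = (i', j')" by (cases p, cases q)
    have "repr (Tstar_V k h) (Tstar_adj k h) P (XI i j) = repr (Tstar_V k h) (Tstar_adj k h) P (XI i' j')"
      using p q eq by (intro repr_XI_eq_if_pendant_code_eq[OF part]) auto
    then have "XI i j = XI i' j'" using distinct[of "XI i j" "XI i' j'"] p q by simp
    then show "p = q" by simp
  qed
  moreover have "case_prod (pendant_code P) ` ?I \<subseteq> ?T"
  proof (rule image_subsetI)
    fix p assume "p \<in> ?I"
    then show "case_prod (pendant_code P) p \<in> ?T"
      by (cases p) (simp only: case_prod_conv, rule pendant_code_mem[OF part], simp)
  qed
  ultimately have "card ?I \<le> card ?T"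
    using fin by (intro card_inj_on_le) auto
  then have "(h - 1) * (h - 1) + card P \<le> card P * card P + 1"
    using card_product_minus_diagonal[OF fin part_of_mem(1)[OF part, of Xv]]
    by (simp add: card_cartesian_product)
  then have "h - 1 < card P"
    using assms(1) by (intro square_bound_imp_less) simp_all
  then show ?thesis by simp
qed

theorem proposition7:
  fixes k h :: nat
  assumes "k \<ge> 1" and "h \<ge> k + 2"
  shows "twin_number (Tstar_V k h) (Tstar_adj k h) = k
    \<and> partition_dimension (Tstar_V k h) (Tstar_adj k h) = h"
proof
  show "twin_number (Tstar_V k h) (Tstar_adj k h) = k"
    using assms by (intro twin_number_Tstar) simp_all
  show "partition_dimension (Tstar_V k h) (Tstar_adj k h) = h"
    unfolding partition_dimension_def
  proof (rule Least_equality)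
    show "\<exists>P. locating_partition (Tstar_V k h) (Tstar_adj k h) P \<and> card P = h"
      using locating_owner_partition[OF assms(2)] card_owner_partition by blast
    show "h \<le> m" if "\<exists>P. locating_partition (Tstar_V k h) (Tstar_adj k h) P \<and> card P = m" for m
      using that assms card_locating_partition_Tstar_ge[of h k] by fastforce
  qed
qed

end
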